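(* Let $\lambda \in \mathrm{Char}(\mathcal{T}op)$. The unique twisted bialgebra morphism $\psi:\mathcal{T}op\longrightarrow \mathcal{C}omp$ such that $\varepsilon'\circ \psi=\lambda$ is given by the following: for any quasi-poset $T=(A,\leq_T)$, \[\psi(T)=\sum_{f\in L'(T)}\lambda(T_{\mid f^{-1}(1)})\ldots\lambda(T_{\mid f^{-1}(\max(f))})(f^{-1}(1),\ldots,f^{-1}(\max(f))).\]
   Context: $\mathcal{T}op[A]$ is the vector space generated by finite topologies on $A$, identified with quasi-posets $(A,\le_T)$ (open sets are upward-closed sets). It is a twisted bialgebra with product disjoint union and coproduct $\Delta_{A,B}(T)=T_{\mid A}\otimes T_{\mid B}$ if $B$ is an open set of $T$, $0$ otherwise. $\mathrm{Char}(\mathcal{T}op)$ is the set of twisted algebra morphisms $\mathcal{T}op\to\mathcal{C}om$ ($\mathcal{C}om[A]=\mathbb{K}$, product the multiplication of scalars). $\mathcal{C}omp[A]$ has basis the set compositions $(A_1,\ldots,A_k)$ of $A$, with quasi-shuffle product $\uplus$: $(A_1,\ldots,A_k)\uplus(A_{k+1},\ldots,A_{k+l})=\sum_{\sigma\in QSh(k,l)}(\bigcup_{\sigma(i)=1}A_i,\ldots,\bigcup_{\sigma(i)=\max\sigma}A_i)$, deconcatenation coproduct $\Delta_{A,B}(A_1,\ldots,A_k)=(A_1,\ldots,A_p)\otimes(A_{p+1},\ldots,A_k)$ if $A_1\sqcup\cdots\sqcup A_p=A$ (else $0$), and character $\varepsilon'(A_1,\ldots,A_k)=\delta_{k,1}$.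 For a quasi-poset $T=(A,\le_T)$, $L'(T)$ is the set of surjections $f:A\to\{1,\ldots,\max(f)\}$ such that $a\le_T b$ implies $f(a)\le f(b)$. *)

theory Defs
  imports Main
begin

text \<open>Finite quasi-posets T = (A, R): R is a reflexive, transitive relation on the
  finite set A; (a,b) in R means a \<le>_T b.  The basis of Top[A] consists of such R,
  so linear maps out of Top[A] are given by their values on these R.\<close>

definition quasi_order :: "'a set \<Rightarrow> ('a \<times> 'a) set \<Rightarrow> bool" where
  "quasi_order A R \<longleftrightarrow> R \<subseteq> A \<times> A \<and> refl_on A R \<and> trans R"

definition restr :: "('a \<times> 'a) set \<Rightarrow> 'a set \<Rightarrow> ('a \<times> 'a) set" where
  "restr R B = R \<inter> (B \<times> B)"

text \<open>Open sets of a topology = upward-closed sets of the quasi-order.\<close>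
definition is_open :: "('a \<times> 'a) set \<Rightarrow> 'a set \<Rightarrow> bool" where
  "is_open R C \<longleftrightarrow> (\<forall>a b. (a, b) \<in> R \<longrightarrow> a \<in> C \<longrightarrow> b \<in> C)"

text \<open>Transport of a quasi-order along a map (action of bijections in the species).\<close>
definition rel_image :: "('a \<Rightarrow> 'a) \<Rightarrow> ('a \<times> 'a) set \<Rightarrow> ('a \<times> 'a) set" where
  "rel_image \<sigma> R = (\<lambda>(x, y). (\<sigma> x, \<sigma> y)) ` R"

text \<open>Set compositions of A (basis of Comp[A]).  An element of Comp[A] is represented as
  a coefficient function on lists of sets, vanishing outside comps A.\<close>
definition comps :: "'a set \<Rightarrow> 'a set list set" where
  "comps A = {c. (\<forall>X\<in>set c. X \<noteq> {}) \<and>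
                 (\<forall>i<length c. \<forall>j<length c. i \<noteq> j \<longrightarrow> c ! i \<inter> c ! j = {}) \<and>
                 \<Union>(set c) = A}"

definition QSh :: "nat \<Rightarrow> nat \<Rightarrow> (nat \<Rightarrow> nat) set" where
  "QSh k l = {\<sigma>. (\<forall>i. i \<notin> {1..k+l} \<longrightarrow> \<sigma> i = 0) \<and> (\<exists>m. \<sigma> ` {1..k+l} = {1..m}) \<and>
                 strict_mono_on {1..k} \<sigma> \<and> strict_mono_on {k+1..k+l} \<sigma>}"

definition qsh_max :: "nat \<Rightarrow> (nat \<Rightarrow> nat) \<Rightarrow> nat" where
  "qsh_max n \<sigma> = Max (insert 0 (\<sigma> ` {1..n}))"

definition qsh_result :: "'a set list \<Rightarrow> 'a set list \<Rightarrow> (nat \<Rightarrow> nat) \<Rightarrow> 'a set list" where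
  "qsh_result c1 c2 \<sigma> =
     (let w = c1 @ c2; n = length w in
      map (\<lambda>j. \<Union>{w ! (i - 1) | i. i \<in> {1..n} \<and> \<sigma> i = j}) [1..<qsh_max n \<sigma> + 1])"

definition qsh_prod :: "'a set \<Rightarrow> 'a set \<Rightarrow> ('a set list \<Rightarrow> 'k::field) \<Rightarrow> ('a set list \<Rightarrow> 'k)
                         \<Rightarrow> 'a set list \<Rightarrow> 'k" where
  "qsh_prod A B u v c =
     (\<Sum>c1\<in>comps A. \<Sum>c2\<in>comps B. u c1 * v c2 *
        of_nat (card {\<sigma> \<in> QSh (length c1) (length c2). qsh_result c1 c2 \<sigma> = c}))"

text \<open>The character epsilon' of Comp: delta_{k,1} on nonempty sets; on Comp[{}] it is the
  counit (value 1 on the empty composition), as required for a character.\<close>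
definition eps_comp :: "'a set \<Rightarrow> ('a set list \<Rightarrow> 'k::field) \<Rightarrow> 'k" where
  "eps_comp A u = (\<Sum>c\<in>comps A. (if length c \<le> 1 then 1 else 0) * u c)"

definition top_character :: "('a set \<Rightarrow> ('a \<times> 'a) set \<Rightarrow> 'k::field) \<Rightarrow> bool" where
  "top_character lam \<longleftrightarrow>
     (\<forall>A B \<sigma> R. finite A \<longrightarrow> bij_betw \<sigma> A B \<longrightarrow> quasi_order A R \<longrightarrow>
         lam B (rel_image \<sigma> R) = lam A R) \<and>
     lam {} {} = 1 \<and>
     (\<forall>A B R S. finite A \<longrightarrow> finite B \<longrightarrow> A \<inter> B = {} \<longrightarrow> quasi_order A R \<longrightarrow> quasi_order B S \<longrightarrow>
         lam (A \<union> B) (R \<union> S) = lam A R * lam B S)"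

definition top_comp_morphism :: "('a set \<Rightarrow> ('a \<times> 'a) set \<Rightarrow> 'a set list \<Rightarrow> 'k::field) \<Rightarrow> bool" where
  "top_comp_morphism \<phi> \<longleftrightarrow>
     (\<forall>A R c. finite A \<longrightarrow> quasi_order A R \<longrightarrow> c \<notin> comps A \<longrightarrow> \<phi> A R c = 0) \<and>
     (\<forall>A B \<sigma> R c. finite A \<longrightarrow> bij_betw \<sigma> A B \<longrightarrow> quasi_order A R \<longrightarrow> c \<in> comps A \<longrightarrow>
         \<phi> B (rel_image \<sigma> R) (map ((`) \<sigma>) c) = \<phi> A R c) \<and>
     \<phi> {} {} = (\<lambda>c. if c = [] then 1 else 0) \<and>
     (\<forall>A B R S. finite A \<longrightarrow> finite B \<longrightarrow> A \<inter> B = {} \<longrightarrow> quasi_order A R \<longrightarrow> quasi_order B S \<longrightarrow>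
         \<phi> (A \<union> B) (R \<union> S) = qsh_prod A B (\<phi> A R) (\<phi> B S)) \<and>
     (\<forall>A B C R. finite A \<longrightarrow> quasi_order A R \<longrightarrow> B \<inter> C = {} \<longrightarrow> B \<union> C = A \<longrightarrow>
         (\<forall>c1\<in>comps B. \<forall>c2\<in>comps C.
            \<phi> A R (c1 @ c2) =
              (if is_open R C then \<phi> B (restr R B) c1 * \<phi> C (restr R C) c2 else 0))) \<and>
     \<phi> {} {} [] = 1"

definition Lp :: "'a set \<Rightarrow> ('a \<times> 'a) set \<Rightarrow> ('a \<Rightarrow> nat) set" where
  "Lp A R = {f. (\<forall>x. x \<notin> A \<longrightarrow> f x = 0) \<and> (\<exists>m. f ` A = {1..m}) \<and>
                (\<forall>a b. (a, b) \<in> R \<longrightarrow> f a \<le> f b)}"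

definition fmax :: "'a set \<Rightarrow> ('a \<Rightarrow> nat) \<Rightarrow> nat" where
  "fmax A f = Max (insert 0 (f ` A))"

definition fblock :: "'a set \<Rightarrow> ('a \<Rightarrow> nat) \<Rightarrow> nat \<Rightarrow> 'a set" where
  "fblock A f i = {x \<in> A. f x = i}"

definition fcomp :: "'a set \<Rightarrow> ('a \<Rightarrow> nat) \<Rightarrow> 'a set list" where
  "fcomp A f = map (fblock A f) [1..<fmax A f + 1]"

definition psi_formula :: "('a set \<Rightarrow> ('a \<times> 'a) set \<Rightarrow> 'k::field) \<Rightarrow> 'a set \<Rightarrow> ('a \<times> 'a) set
                            \<Rightarrow> 'a set list \<Rightarrow> 'k" where
  "psi_formula lam A R c =
     (\<Sum>f\<in>Lp A R. if c = fcomp A f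
        then (\<Prod>i\<in>{1..fmax A f}. lam (fblock A f i) (restr R (fblock A f i))) else 0)"

end

theory Submission
  imports Defs
begin

(* The maps f in L'(T) are the block-index maps of the set compositions (A_1, ..., A_k) of A
  whose blocks are ordered compatibly with T, so the claimed psi(T) has the coefficient
  lam(T|A_1) ... lam(T|A_k) at each such composition and 0 at all others.
  Uniqueness: the coproduct gives phi(T)(A_1, ..., A_k) = phi(T|A_1)(A_1) phi(T|A - A_1)(A_2, ..., A_k)
  if A - A_1 is open and 0 otherwise, while phi(T|A_1)(A_1) = eps'(phi(T|A_1)) = lam(T|A_1);
  induct on k.
  Existence: unit, counit and coproduct are immediate from this product form. For the product,
  a composition of a disjoint union A + B arises by quasi-shuffling a composition of A with one
  of B in exactly one way, namely from its own restrictions to A and to B, and each factor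
  lam(T|A_i) splits along A and B because lam is a character. *)

lemma comps_Nil_iff [simp]: "[] \<in> comps A \<longleftrightarrow> A = {}"
  by (auto simp: comps_def)

lemma comps_Cons_iff:
  "X # c \<in> comps A \<longleftrightarrow> X \<noteq> {} \<and> X \<subseteq> A \<and> c \<in> comps (A - X)"
proof
  assume Xc: "X # c \<in> comps A"
  then have disj: "\<And>i j. i < length (X # c) \<Longrightarrow> j < length (X # c) \<Longrightarrow> i \<noteq> j \<Longrightarrow>
      (X # c) ! i \<inter> (X # c) ! j = {}"
    by (auto simp: comps_def)
  have "X \<inter> Y = {}" if "Y \<in> set c" for Y
    using that disj[of 0 "Suc i" for i] by (auto simp: in_set_conv_nth)
  moreover have "c ! i \<inter> c ! j = {}" if "i < length c" "j < length c" "i \<noteq> j" for i j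
    using that disj[of "Suc i" "Suc j"] by simp
  ultimately show "X \<noteq> {} \<and> X \<subseteq> A \<and> c \<in> comps (A - X)"
    using Xc by (auto simp: comps_def)
next
  assume "X \<noteq> {} \<and> X \<subseteq> A \<and> c \<in> comps (A - X)"
  then show "X # c \<in> comps A"
    by (auto simp: comps_def nth_Cons split: nat.splits)
qed

lemma comps_empty: "comps {} = {[]}"
proof -
  have "c \<in> comps {} \<longleftrightarrow> c = []" for c :: "'a set list"
    by (cases c) (auto simp: comps_Cons_iff)
  then show ?thesis
    by blast
qed

lemma comps_append:
  "c1 \<in> comps A \<Longrightarrow> c2 \<in> comps B \<Longrightarrow> A \<inter> B = {} \<Longrightarrow> c1 @ c2 \<in> comps (A \<union> B)"
proof (induction c1 arbitrary: A)
  case (Cons X c1)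
  then have "A \<union> B - X = (A - X) \<union> B"
    by (auto simp: comps_Cons_iff)
  with Cons show ?case
    by (auto simp: comps_Cons_iff)
qed simp

lemma Union_comps: "c \<in> comps A \<Longrightarrow> \<Union>(set c) = A"
  by (simp add: comps_def)

lemma comps_subset: "c \<in> comps A \<Longrightarrow> X \<in> set c \<Longrightarrow> X \<subseteq> A"
  by (auto simp: comps_def)

lemma comps_nth_subset: "c \<in> comps A \<Longrightarrow> i < length c \<Longrightarrow> c ! i \<subseteq> A"
  by (auto simp: comps_def)

lemma comps_nonempty: "c \<in> comps A \<Longrightarrow> X \<in> set c \<Longrightarrow> X \<noteq> {}"
  by (auto simp: comps_def)

lemma comps_nth_nonempty: "c \<in> comps A \<Longrightarrow> i < length c \<Longrightarrow> c ! i \<noteq> {}"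
  by (auto simp: comps_def)

lemma comps_index_unique:
  "c \<in> comps A \<Longrightarrow> i < length c \<Longrightarrow> j < length c \<Longrightarrow> x \<in> c ! i \<Longrightarrow> x \<in> c ! j \<Longrightarrow> i = j"
  by (auto simp: comps_def)

lemma comps_index_exists: "c \<in> comps A \<Longrightarrow> x \<in> A \<Longrightarrow> \<exists>i<length c. x \<in> c ! i"
  by (auto simp: comps_def in_set_conv_nth)

lemma comps_distinct: "c \<in> comps A \<Longrightarrow> distinct c"
  by (metis comps_index_unique comps_nth_nonempty distinct_conv_nth ex_in_conv)

lemma finite_comps: "finite A \<Longrightarrow> finite (comps A)"
proof (rule finite_subset)
  show "comps A \<subseteq> {c. set c \<subseteq> Pow A \<and> distinct c}"
    using comps_distinct comps_subset by blast
qed (intro finite_subset_distinct; simp)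

lemma quasi_order_subset: "quasi_order A R \<Longrightarrow> R \<subseteq> A \<times> A"
  by (simp add: quasi_order_def)

lemma restr_empty [simp]: "restr R {} = {}"
  by (simp add: restr_def)

lemma restr_restr: "X \<subseteq> D \<Longrightarrow> restr (restr R D) X = restr R X"
  by (auto simp: restr_def)

lemma restr_self: "R \<subseteq> A \<times> A \<Longrightarrow> restr R A = R"
  by (auto simp: restr_def)

lemma quasi_order_restr: "quasi_order A R \<Longrightarrow> Y \<subseteq> A \<Longrightarrow> quasi_order Y (restr R Y)"
  unfolding quasi_order_def restr_def refl_on_def trans_def by blast

lemma quasi_order_empty_iff: "quasi_order {} R \<longleftrightarrow> R = {}"
  by (auto simp: quasi_order_def refl_on_def trans_def)

lemma quasi_order_Un:
  assumes R: "quasi_order A R" and S: "quasi_order B S" and disj: "A \<inter> B = {}"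
  shows "quasi_order (A \<union> B) (R \<union> S)"
proof -
  have "(x, z) \<in> R \<union> S" if xy: "(x, y) \<in> R \<union> S" and yz: "(y, z) \<in> R \<union> S" for x y z
  proof (cases "(x, y) \<in> R")
    case True
    then have "(y, z) \<in> R"
      using yz disj quasi_order_subset[OF R] quasi_order_subset[OF S] by blast
    with True show ?thesis
      using R unfolding quasi_order_def by (meson UnI1 transE)
  next
    case False
    then have "(x, y) \<in> S" "(y, z) \<in> S"
      using xy yz disj quasi_order_subset[OF R] quasi_order_subset[OF S] by blast+
    then show ?thesis
      using S unfolding quasi_order_def by (meson UnI2 transE)
  qed
  then show ?thesis
    using R S unfolding quasi_order_def refl_on_def trans_def by blast
qed

lemma rel_image_pair [intro]: "(a, b) \<in> R \<Longrightarrow> (\<sigma> a, \<sigma> b) \<in> rel_image \<sigma> R"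
  unfolding rel_image_def by (rule image_eqI[where x = "(a, b)"]) simp_all

lemma rel_imageE:
  assumes "p \<in> rel_image \<sigma> R"
  obtains a b where "(a, b) \<in> R" "p = (\<sigma> a, \<sigma> b)"
  using assms unfolding rel_image_def by auto

lemma rel_image_mem_iff:
  assumes "inj_on \<sigma> A" and "R \<subseteq> A \<times> A" and "a \<in> A" and "b \<in> A"
  shows "(\<sigma> a, \<sigma> b) \<in> rel_image \<sigma> R \<longleftrightarrow> (a, b) \<in> R"
proof
  assume "(\<sigma> a, \<sigma> b) \<in> rel_image \<sigma> R"
  then obtain a' b' where "(a', b') \<in> R" "\<sigma> a = \<sigma> a'" "\<sigma> b = \<sigma> b'"
    by (auto elim!: rel_imageE)
  with assms show "(a, b) \<in> R"
    unfolding inj_on_def by blast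
qed blast

lemma quasi_order_rel_image:
  assumes bij: "bij_betw \<sigma> A B" and qo: "quasi_order A R"
  shows "quasi_order B (rel_image \<sigma> R)"
proof -
  have inj: "inj_on \<sigma> A" and B: "B = \<sigma> ` A" and R: "R \<subseteq> A \<times> A"
    using bij qo by (auto simp: bij_betw_def quasi_order_def)
  have "rel_image \<sigma> R \<subseteq> B \<times> B"
    using R B by (auto elim!: rel_imageE)
  moreover have "refl_on B (rel_image \<sigma> R)"
    using qo B unfolding quasi_order_def refl_on_def by blast
  moreover have "trans (rel_image \<sigma> R)"
  proof (rule transI)
    fix x y z assume "(x, y) \<in> rel_image \<sigma> R" "(y, z) \<in> rel_image \<sigma> R"
    then obtain a b b' d where ab: "(a, b) \<in> R" and bd: "(b', d) \<in> R"
      and eqs: "x = \<sigma> a" "y = \<sigma> b" "y = \<sigma> b'" "z = \<sigma> d"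
      by (metis Pair_inject rel_imageE)
    then have "b = b'"
      using inj R unfolding inj_on_def by blast
    with ab bd have "(a, d) \<in> R"
      using qo unfolding quasi_order_def by (meson transE)
    with eqs show "(x, z) \<in> rel_image \<sigma> R"
      by blast
  qed
  ultimately show ?thesis
    by (simp add: quasi_order_def)
qed

lemma top_character_empty: "top_character lam \<Longrightarrow> lam {} {} = 1"
  by (simp add: top_character_def)

lemma top_character_Un:
  "top_character lam \<Longrightarrow> finite A \<Longrightarrow> finite B \<Longrightarrow> A \<inter> B = {} \<Longrightarrow>
    quasi_order A R \<Longrightarrow> quasi_order B S \<Longrightarrow> lam (A \<union> B) (R \<union> S) = lam A R * lam B S"
  by (simp add: top_character_def)

lemma top_character_rel_image:
  "top_character lam \<Longrightarrow> finite A \<Longrightarrow> bij_betw \<sigma> A B \<Longrightarrow> quasi_order A R \<Longrightarrow>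
    lam B (rel_image \<sigma> R) = lam A R"
  by (simp add: top_character_def)

section \<open>The coefficients of psi\<close>

definition mono_comp :: "('a \<times> 'a) set \<Rightarrow> 'a set list \<Rightarrow> bool" where
  "mono_comp R c \<longleftrightarrow> (\<forall>i<length c. \<forall>j<length c. \<forall>a\<in>c ! i. \<forall>b\<in>c ! j. (a, b) \<in> R \<longrightarrow> i \<le> j)"

definition comp_weight ::
  "('a set \<Rightarrow> ('a \<times> 'a) set \<Rightarrow> 'k::comm_monoid_mult) \<Rightarrow> ('a \<times> 'a) set \<Rightarrow> 'a set list \<Rightarrow> 'k" where
  "comp_weight lam R c = (\<Prod>X\<leftarrow>c. lam X (restr R X))"

definition psi_comp :: "('a set \<Rightarrow> ('a \<times> 'a) set \<Rightarrow> 'k::comm_semiring_1) \<Rightarrow> 'a set \<Rightarrow> ('a \<times> 'a) set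
                         \<Rightarrow> 'a set list \<Rightarrow> 'k" where
  "psi_comp lam A R c = (if c \<in> comps A \<and> mono_comp R c then comp_weight lam R c else 0)"

lemma mono_comp_Nil [simp]: "mono_comp R []"
  by (simp add: mono_comp_def)

lemma ball_Union_set_conv_nth: "(\<forall>x\<in>\<Union>(set xs). P x) \<longleftrightarrow> (\<forall>i<length xs. \<forall>x\<in>xs ! i. P x)"
  by (metis UnionE UnionI in_set_conv_nth)

lemma mono_comp_Cons [simp]:
  "mono_comp R (X # c) \<longleftrightarrow> mono_comp R c \<and> (\<forall>a\<in>\<Union>(set c). \<forall>b\<in>X. (a, b) \<notin> R)"
  unfolding mono_comp_def ball_Union_set_conv_nth by (simp add: All_less_Suc2) blast

lemma mono_comp_append:
  "mono_comp R (c1 @ c2) \<longleftrightarrow>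
     mono_comp R c1 \<and> mono_comp R c2 \<and> (\<forall>a\<in>\<Union>(set c2). \<forall>b\<in>\<Union>(set c1). (a, b) \<notin> R)"
proof (induction c1)
  case (Cons X c1)
  then show ?case
    by (simp only: mono_comp_Cons append_Cons set_append list.set(2) Union_Un_distrib Union_insert ball_Un) blast
qed simp

lemma mono_comp_restr: "\<Union>(set c) \<subseteq> D \<Longrightarrow> mono_comp (restr R D) c \<longleftrightarrow> mono_comp R c"
proof (induction c)
  case (Cons X c)
  then have "X \<subseteq> D" "\<Union>(set c) \<subseteq> D"
    by auto
  with Cons.IH show ?case
    unfolding mono_comp_Cons restr_def by blast
qed simp

lemma comp_weight_Nil [simp]: "comp_weight lam R [] = 1"
  by (simp add: comp_weight_def)

lemma comp_weight_Cons [simp]: "comp_weight lam R (X # c) = lam X (restr R X) * comp_weight lam R c"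
  by (simp add: comp_weight_def)

lemma comp_weight_append: "comp_weight lam R (c1 @ c2) = comp_weight lam R c1 * comp_weight lam R c2"
  by (simp add: comp_weight_def)

lemma comp_weight_restr:
  "\<Union>(set c) \<subseteq> D \<Longrightarrow> comp_weight lam (restr R D) c = comp_weight lam R c"
  unfolding comp_weight_def by (intro arg_cong[where f = prod_list] map_cong refl) (simp add: restr_restr Sup_le_iff)

lemma Max_insert_0_atLeastAtMost: "Max (insert 0 {1..m::nat}) = m"
  by (cases m) (auto intro!: Max_eqI)

lemma LpE:
  assumes "f \<in> Lp A R"
  obtains m where "\<forall>x. x \<notin> A \<longrightarrow> f x = 0" "f ` A = {1..m}" "\<forall>a b. (a, b) \<in> R \<longrightarrow> f a \<le> f b"
  using assms by (auto simp: Lp_def)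

lemma fcomp_surjection:
  assumes zero: "\<forall>x. x \<notin> A \<longrightarrow> f x = 0" and onto: "f ` A = {1..m}"
  shows "length (fcomp A f) = m" and "\<And>j. j < m \<Longrightarrow> fcomp A f ! j = {x \<in> A. f x = Suc j}"
    and "fcomp A f \<in> comps A"
proof -
  have fmax: "fmax A f = m"
    unfolding fmax_def onto by (rule Max_insert_0_atLeastAtMost)
  show len: "length (fcomp A f) = m"
    by (simp add: fcomp_def fmax)
  show nth: "fcomp A f ! j = {x \<in> A. f x = Suc j}" if "j < m" for j
    using that by (simp add: fcomp_def fmax fblock_def del: upt_Suc)
  have "X \<noteq> {}" if "X \<in> set (fcomp A f)" for X
  proof -
    from that obtain j where "j < m" "X = fcomp A f ! j"
      using len by (auto simp: in_set_conv_nth)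
    then have "Suc j \<in> f ` A" and "X = {x \<in> A. f x = Suc j}"
      using nth unfolding onto by auto
    then show ?thesis
      by auto
  qed
  moreover have "x \<in> \<Union>(set (fcomp A f))" if "x \<in> A" for x
  proof -
    from that have "f x \<in> {1..m}"
      using onto by blast
    then have "f x - 1 < length (fcomp A f)" and "x \<in> fcomp A f ! (f x - 1)"
      using nth[of "f x - 1"] len that by auto
    then show ?thesis
      by (meson UnionI nth_mem)
  qed
  ultimately show "fcomp A f \<in> comps A"
    unfolding comps_def using nth len by (auto simp: in_set_conv_nth)
qed

lemma fcomp_Lp_mono_comp: "f \<in> Lp A R \<Longrightarrow> fcomp A f \<in> comps A \<and> mono_comp R (fcomp A f)"
proof -
  assume "f \<in> Lp A R"
  then obtain m where zero: "\<forall>x. x \<notin> A \<longrightarrow> f x = 0" and onto: "f ` A = {1..m}"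
    and mono: "\<forall>a b. (a, b) \<in> R \<longrightarrow> f a \<le> f b"
    by (rule LpE)
  note blocks = fcomp_surjection[OF zero onto]
  have "mono_comp R (fcomp A f)"
    unfolding mono_comp_def blocks(1)
  proof (intro allI impI ballI)
    fix i j a b
    assume "i < m" "j < m" "a \<in> fcomp A f ! i" "b \<in> fcomp A f ! j" "(a, b) \<in> R"
    then show "i \<le> j"
      using blocks(2) mono by (metis (mono_tags, lifting) Suc_le_mono mem_Collect_eq)
  qed
  with blocks(3) show ?thesis
    by blast
qed

lemma inj_on_fcomp_Lp: "inj_on (fcomp A) (Lp A R)"
proof (rule inj_onI)
  fix f g
  assume "f \<in> Lp A R" "g \<in> Lp A R" and eq: "fcomp A f = fcomp A g"
  then obtain m n where zero: "\<forall>x. x \<notin> A \<longrightarrow> f x = 0" "\<forall>x. x \<notin> A \<longrightarrow> g x = 0"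
    and onto: "f ` A = {1..m}" "g ` A = {1..n}"
    by (metis LpE)
  note f_blocks = fcomp_surjection[OF zero(1) onto(1)]
    and g_blocks = fcomp_surjection[OF zero(2) onto(2)]
  have "m = n"
    using f_blocks(1) g_blocks(1) eq by simp
  have on_A: "f x = g x" if "x \<in> A" for x
  proof -
    have "g x \<in> {1..n}"
      using that onto(2) by blast
    then have "g x - 1 < m" "Suc (g x - 1) = g x"
      using \<open>m = n\<close> by auto
    then have "fcomp A f ! (g x - 1) = {y \<in> A. f y = g x}" "fcomp A g ! (g x - 1) = {y \<in> A. g y = g x}"
      using f_blocks(2) g_blocks(2) \<open>m = n\<close> by simp_all
    with eq that show ?thesis
      by auto
  qed
  show "f = g"
  proof
    show "f x = g x" for x
      using on_A zero by (cases "x \<in> A") simp_all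
  qed
qed

definition comp_index :: "'a set list \<Rightarrow> 'a \<Rightarrow> nat" where
  "comp_index c x = (if x \<in> \<Union>(set c) then Suc (THE j. j < length c \<and> x \<in> c ! j) else 0)"

lemma comp_index_eq:
  assumes "c \<in> comps A" and "j < length c" and "x \<in> c ! j"
  shows "comp_index c x = Suc j"
proof -
  have "(THE j. j < length c \<and> x \<in> c ! j) = j"
    using assms(2,3) comps_index_unique[OF assms(1)] by blast
  moreover have "x \<in> \<Union>(set c)"
    using assms(2,3) nth_mem by blast
  ultimately show ?thesis
    by (simp add: comp_index_def)
qed

lemma comp_index_outside: "c \<in> comps A \<Longrightarrow> x \<notin> A \<Longrightarrow> comp_index c x = 0"
  by (simp add: comp_index_def Union_comps)

lemma comp_index_image:
  assumes c: "c \<in> comps A"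
  shows "comp_index c ` A = {1..length c}"
proof
  show "comp_index c ` A \<subseteq> {1..length c}"
  proof
    fix k assume "k \<in> comp_index c ` A"
    then obtain x where "x \<in> A" "k = comp_index c x"
      by blast
    moreover obtain j where "j < length c" "x \<in> c ! j"
      using comps_index_exists[OF c \<open>x \<in> A\<close>] by blast
    ultimately show "k \<in> {1..length c}"
      using comp_index_eq[OF c] by simp
  qed
  show "{1..length c} \<subseteq> comp_index c ` A"
  proof
    fix k assume k: "k \<in> {1..length c}"
    then have "k - 1 < length c"
      by auto
    moreover obtain x where "x \<in> c ! (k - 1)"
      using comps_nth_nonempty[OF c \<open>k - 1 < length c\<close>] by blast
    ultimately have "x \<in> A" "comp_index c x = k"
      using k comps_nth_subset[OF c] comp_index_eq[OF c] by auto
    then show "k \<in> comp_index c ` A"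
      by (metis imageI)
  qed
qed

lemma fcomp_comp_index:
  assumes c: "c \<in> comps A"
  shows "fcomp A (comp_index c) = c"
proof (rule nth_equalityI)
  note blocks = fcomp_surjection[OF _ comp_index_image[OF c]]
  have zero: "\<forall>x. x \<notin> A \<longrightarrow> comp_index c x = 0"
    using comp_index_outside[OF c] by blast
  show "length (fcomp A (comp_index c)) = length c"
    using blocks(1)[OF zero] .
  fix j assume "j < length (fcomp A (comp_index c))"
  then have j: "j < length c"
    using blocks(1)[OF zero] by simp
  have "x \<in> c ! j" if "x \<in> A" "comp_index c x = Suc j" for x
    using that comps_index_exists[OF c] comp_index_eq[OF c] by fastforce
  then show "fcomp A (comp_index c) ! j = c ! j"
    using blocks(2)[OF zero j] comp_index_eq[OF c j] comps_nth_subset[OF c j] by auto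
qed

lemma comp_index_Lp:
  assumes R: "R \<subseteq> A \<times> A" and c: "c \<in> comps A" and mono: "mono_comp R c"
  shows "comp_index c \<in> Lp A R"
proof -
  have "comp_index c a \<le> comp_index c b" if ab: "(a, b) \<in> R" for a b
  proof -
    obtain i j where "i < length c" "a \<in> c ! i" "j < length c" "b \<in> c ! j"
      using ab R comps_index_exists[OF c] by blast
    with ab mono show ?thesis
      unfolding mono_comp_def using comp_index_eq[OF c] by auto
  qed
  then show ?thesis
    unfolding Lp_def using comp_index_outside[OF c] comp_index_image[OF c] by blast
qed

lemma fcomp_image_Lp:
  assumes "R \<subseteq> A \<times> A"
  shows "fcomp A ` Lp A R = {c \<in> comps A. mono_comp R c}"
proof
  show "fcomp A ` Lp A R \<subseteq> {c \<in> comps A. mono_comp R c}"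
    using fcomp_Lp_mono_comp by blast
  show "{c \<in> comps A. mono_comp R c} \<subseteq> fcomp A ` Lp A R"
  proof
    fix c assume "c \<in> {c \<in> comps A. mono_comp R c}"
    then have "fcomp A (comp_index c) = c" "comp_index c \<in> Lp A R"
      using comp_index_Lp[OF assms] fcomp_comp_index by auto
    then show "c \<in> fcomp A ` Lp A R"
      by (metis imageI)
  qed
qed

lemma comp_weight_fcomp:
  "comp_weight lam R (fcomp A f) = (\<Prod>i\<in>{1..fmax A f}. lam (fblock A f i) (restr R (fblock A f i)))"
proof -
  have "comp_weight lam R (fcomp A f) = (\<Prod>i\<leftarrow>[1..<fmax A f + 1]. lam (fblock A f i) (restr R (fblock A f i)))"
    by (simp add: comp_weight_def fcomp_def comp_def del: upt_Suc)
  also have "\<dots> = (\<Prod>i\<in>set [1..<fmax A f + 1]. lam (fblock A f i) (restr R (fblock A f i)))"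
    by (rule prod.distinct_set_conv_list[symmetric]) simp
  also have "set [1..<fmax A f + 1] = {1..fmax A f}"
    by auto
  finally show ?thesis .
qed

lemma psi_formula_eq_psi_comp:
  assumes "finite A" and "R \<subseteq> A \<times> A"
  shows "psi_formula lam A R = psi_comp lam A R"
proof
  fix c
  let ?term = "\<lambda>d. if c = d then comp_weight lam R d else 0"
  have "psi_formula lam A R c = (\<Sum>f\<in>Lp A R. ?term (fcomp A f))"
    unfolding psi_formula_def comp_weight_fcomp by (intro sum.cong) auto
  also have "\<dots> = (\<Sum>d\<in>fcomp A ` Lp A R. ?term d)"
    by (rule sum.reindex[OF inj_on_fcomp_Lp, symmetric, unfolded comp_def])
  also have "\<dots> = psi_comp lam A R c"
    using finite_subset[OF _ finite_comps[OF assms(1)]]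
    by (simp add: fcomp_image_Lp[OF assms(2)] psi_comp_def)
  finally show "psi_formula lam A R c = psi_comp lam A R c" .
qed

section \<open>Unit, counit and coproduct\<close>

lemma psi_comp_empty: "psi_comp lam {} {} = (\<lambda>c. if c = [] then 1 else 0)"
  by (auto simp: psi_comp_def comps_empty)

lemma psi_comp_singleton: "X \<noteq> {} \<Longrightarrow> R \<subseteq> X \<times> X \<Longrightarrow> psi_comp lam X R [X] = lam X R"
  by (simp add: psi_comp_def comps_Cons_iff comp_weight_def restr_self)

lemma psi_comp_append:
  assumes R: "R \<subseteq> A \<times> A" and disj: "B \<inter> C = {}" and cover: "B \<union> C = A"
    and c1: "c1 \<in> comps B" and c2: "c2 \<in> comps C"
  shows "psi_comp lam A R (c1 @ c2) =
    (if is_open R C then psi_comp lam B (restr R B) c1 * psi_comp lam C (restr R C) c2 else 0)"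
proof -
  have "c1 @ c2 \<in> comps A"
    using comps_append[OF c1 c2 disj] cover by simp
  moreover have "is_open R C \<longleftrightarrow> (\<forall>a\<in>C. \<forall>b\<in>B. (a, b) \<notin> R)"
    using R disj cover unfolding is_open_def by blast
  ultimately show ?thesis
    using c1 c2 mono_comp_restr[of c1 B R] mono_comp_restr[of c2 C R]
      comp_weight_restr[of c1 B lam R] comp_weight_restr[of c2 C lam R]
    by (auto simp: psi_comp_def mono_comp_append comp_weight_append Union_comps)
qed

lemma eps_comp_empty: "eps_comp {} u = u []"
  by (simp add: eps_comp_def comps_empty)

lemma eps_comp_nonempty:
  assumes "finite X" and "X \<noteq> {}"
  shows "eps_comp X u = u [X]"
proof -
  have "(if length c \<le> 1 then 1 else 0) * u c = (if c = [X] then u [X] else 0)" if "c \<in> comps X" for c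
    using that assms(2) by (cases c rule: list.exhaust[case_product list.exhaust])
      (auto simp: comps_Cons_iff)
  then have "eps_comp X u = (\<Sum>c\<in>comps X. if c = [X] then u [X] else 0)"
    unfolding eps_comp_def by (rule sum.cong[OF refl])
  then show ?thesis
    using finite_comps[OF assms(1)] assms(2) by (simp add: comps_Cons_iff)
qed

lemma eps_comp_psi_comp:
  assumes "top_character lam" and "finite A" and "quasi_order A R"
  shows "eps_comp A (psi_comp lam A R) = lam A R"
proof (cases "A = {}")
  case True
  then show ?thesis
    using assms by (simp add: eps_comp_empty quasi_order_empty_iff psi_comp_empty top_character_empty)
next
  case False
  then show ?thesis
    using assms by (simp add: eps_comp_nonempty psi_comp_singleton quasi_order_subset)
qed

section \<open>Equivariance\<close>

lemma comps_image:
  assumes bij: "bij_betw \<sigma> A B" and c: "c \<in> comps A"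
  shows "map ((`) \<sigma>) c \<in> comps B"
proof -
  have inj: "inj_on \<sigma> A" and B: "\<sigma> ` A = B"
    using bij by (auto simp: bij_betw_def)
  have "\<sigma> ` (c ! i) \<inter> \<sigma> ` (c ! j) = {}" if "i < length c" "j < length c" "i \<noteq> j" for i j
  proof -
    have "\<sigma> ` (c ! i) \<inter> \<sigma> ` (c ! j) = \<sigma> ` (c ! i \<inter> c ! j)"
      using inj_on_image_Int[OF inj] comps_nth_subset[OF c] that by blast
    also have "c ! i \<inter> c ! j = {}"
      using c that by (auto simp: comps_def)
    finally show ?thesis
      by simp
  qed
  moreover have "\<Union>(set (map ((`) \<sigma>) c)) = B"
    using Union_comps[OF c] B by auto
  ultimately show ?thesis
    using comps_nonempty[OF c] by (auto simp: comps_def)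
qed

lemma mono_comp_rel_image:
  assumes "inj_on \<sigma> A" and "R \<subseteq> A \<times> A" and "\<Union>(set c) \<subseteq> A"
  shows "mono_comp (rel_image \<sigma> R) (map ((`) \<sigma>) c) \<longleftrightarrow> mono_comp R c"
  using assms(3)
proof (induction c)
  case (Cons X c)
  have iff: "(\<sigma> a, \<sigma> b) \<in> rel_image \<sigma> R \<longleftrightarrow> (a, b) \<in> R" if "a \<in> \<Union>(set c)" "b \<in> X" for a b
  proof (rule rel_image_mem_iff[OF assms(1,2)])
    show "a \<in> A" "b \<in> A"
      using Cons.prems that by auto
  qed
  have "(\<forall>a\<in>\<Union>(set (map ((`) \<sigma>) c)). \<forall>b\<in>\<sigma> ` X. (a, b) \<notin> rel_image \<sigma> R) \<longleftrightarrow>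
        (\<forall>a\<in>\<Union>(set c). \<forall>b\<in>X. (a, b) \<notin> R)"
    using iff by (simp add: ball_Union_set_conv_nth) (meson UnionI nth_mem)
  with Cons show ?case
    by simp
qed simp

lemma restr_rel_image:
  assumes inj: "inj_on \<sigma> A" and R: "R \<subseteq> A \<times> A" and X: "X \<subseteq> A"
  shows "restr (rel_image \<sigma> R) (\<sigma> ` X) = rel_image \<sigma> (restr R X)"
proof
  show "restr (rel_image \<sigma> R) (\<sigma> ` X) \<subseteq> rel_image \<sigma> (restr R X)"
  proof
    fix p assume p: "p \<in> restr (rel_image \<sigma> R) (\<sigma> ` X)"
    then obtain a b where ab: "(a, b) \<in> R" "p = (\<sigma> a, \<sigma> b)"
      unfolding restr_def by (auto elim!: rel_imageE)
    with p have "a \<in> X" "b \<in> X"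
      using inj R X unfolding restr_def inj_on_def by blast+
    with ab show "p \<in> rel_image \<sigma> (restr R X)"
      unfolding restr_def by blast
  qed
qed (auto simp: restr_def elim!: rel_imageE)

lemma comp_weight_rel_image:
  assumes lam: "top_character lam" and A: "finite A" and inj: "inj_on \<sigma> A" and qo: "quasi_order A R"
    and c: "\<Union>(set c) \<subseteq> A"
  shows "comp_weight lam (rel_image \<sigma> R) (map ((`) \<sigma>) c) = comp_weight lam R c"
proof -
  have "lam (\<sigma> ` X) (restr (rel_image \<sigma> R) (\<sigma> ` X)) = lam X (restr R X)" if "X \<in> set c" for X
  proof -
    have X: "X \<subseteq> A"
      using c that by blast
    have "bij_betw \<sigma> X (\<sigma> ` X)"
      using inj_on_subset[OF inj X] by (simp add: bij_betw_def)
    then have "lam (\<sigma> ` X) (rel_image \<sigma> (restr R X)) = lam X (restr R X)"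
      using top_character_rel_image[OF lam] finite_subset[OF X A] quasi_order_restr[OF qo X] by blast
    then show ?thesis
      using restr_rel_image[OF inj quasi_order_subset[OF qo] X] by simp
  qed
  then show ?thesis
    unfolding comp_weight_def map_map comp_def by (metis (no_types, lifting) map_cong)
qed

lemma psi_comp_rel_image:
  assumes lam: "top_character lam" and A: "finite A" and bij: "bij_betw \<sigma> A B"
    and qo: "quasi_order A R" and c: "c \<in> comps A"
  shows "psi_comp lam B (rel_image \<sigma> R) (map ((`) \<sigma>) c) = psi_comp lam A R c"
proof -
  have inj: "inj_on \<sigma> A"
    using bij by (simp add: bij_betw_def)
  have "\<Union>(set c) \<subseteq> A"
    using Union_comps[OF c] by simp
  then show ?thesis
    using c comps_image[OF bij c] mono_comp_rel_image[OF inj quasi_order_subset[OF qo]]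
      comp_weight_rel_image[OF lam A inj qo]
    by (simp add: psi_comp_def)
qed

definition comp_restr :: "'a set \<Rightarrow> 'a set list \<Rightarrow> 'a set list" where
  "comp_restr D c = filter (\<lambda>X. X \<noteq> {}) (map (\<lambda>X. X \<inter> D) c)"

lemma comp_restr_Nil [simp]: "comp_restr D [] = []"
  by (simp add: comp_restr_def)

lemma comp_restr_Cons:
  "comp_restr D (X # c) = (if X \<inter> D = {} then comp_restr D c else (X \<inter> D) # comp_restr D c)"
  by (simp add: comp_restr_def)

lemma Union_comp_restr: "\<Union>(set (comp_restr D c)) = \<Union>(set c) \<inter> D"
  by (induction c) (auto simp: comp_restr_Cons)

lemma comps_comp_restr: "c \<in> comps U \<Longrightarrow> comp_restr D c \<in> comps (U \<inter> D)"
proof (induction c arbitrary: U)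
  case (Cons X c)
  then have "X \<noteq> {}" "X \<subseteq> U" "comp_restr D c \<in> comps ((U - X) \<inter> D)"
    by (auto simp: comps_Cons_iff)
  moreover have "(U - X) \<inter> D = U \<inter> D - X \<inter> D"
    by blast
  ultimately show ?case
    by (auto simp: comp_restr_Cons comps_Cons_iff Int_Diff)
qed simp

lemma comp_restr_conv_filter:
  "comp_restr D c = map (\<lambda>j. c ! j \<inter> D) (filter (\<lambda>j. c ! j \<inter> D \<noteq> {}) [0..<length c])"
proof -
  have "map (\<lambda>X. X \<inter> D) c = map (\<lambda>j. c ! j \<inter> D) [0..<length c]"
    by (rule nth_equalityI) simp_all
  then show ?thesis
    by (simp add: comp_restr_def filter_map comp_def)
qed

lemma mono_comp_comp_restr_Cons:
  assumes "R \<subseteq> D \<times> D"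
  shows "mono_comp R (comp_restr D (X # c)) \<longleftrightarrow>
    mono_comp R (comp_restr D c) \<and> (\<forall>a\<in>\<Union>(set c). \<forall>b\<in>X. (a, b) \<notin> R)"
  using assms by (auto simp: comp_restr_Cons Union_comp_restr)

lemma mono_comp_Un:
  assumes "R \<subseteq> A \<times> A" and "S \<subseteq> B \<times> B"
  shows "mono_comp (R \<union> S) c \<longleftrightarrow> mono_comp R (comp_restr A c) \<and> mono_comp S (comp_restr B c)"
proof (induction c)
  case (Cons X c)
  then show ?case
    unfolding mono_comp_Cons mono_comp_comp_restr_Cons[OF assms(1)] mono_comp_comp_restr_Cons[OF assms(2)]
    by blast
qed simp

lemma top_character_restr_Un:
  assumes lam: "top_character lam" and fin: "finite A" "finite B" and disj: "A \<inter> B = {}"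
    and qo: "quasi_order A R" "quasi_order B S" and X: "X \<subseteq> A \<union> B"
  shows "lam X (restr (R \<union> S) X) = lam (X \<inter> A) (restr R (X \<inter> A)) * lam (X \<inter> B) (restr S (X \<inter> B))"
proof -
  have "X = (X \<inter> A) \<union> (X \<inter> B)" and "restr (R \<union> S) X = restr R (X \<inter> A) \<union> restr S (X \<inter> B)"
    using X disj quasi_order_subset[OF qo(1)] quasi_order_subset[OF qo(2)] by (auto simp: restr_def)
  moreover have "lam ((X \<inter> A) \<union> (X \<inter> B)) (restr R (X \<inter> A) \<union> restr S (X \<inter> B)) =
      lam (X \<inter> A) (restr R (X \<inter> A)) * lam (X \<inter> B) (restr S (X \<inter> B))"
    by (rule top_character_Un[OF lam])
      (use fin disj quasi_order_restr[OF qo(1)] quasi_order_restr[OF qo(2)] in auto)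
  ultimately show ?thesis
    by simp
qed

lemma comp_weight_comp_restr_Cons:
  "lam {} {} = 1 \<Longrightarrow>
    comp_weight lam R (comp_restr D (X # c)) = lam (X \<inter> D) (restr R (X \<inter> D)) * comp_weight lam R (comp_restr D c)"
  by (simp add: comp_restr_Cons)

lemma comp_weight_Un:
  assumes lam: "top_character lam" and fin: "finite A" "finite B" and disj: "A \<inter> B = {}"
    and qo: "quasi_order A R" "quasi_order B S"
  shows "\<Union>(set c) \<subseteq> A \<union> B \<Longrightarrow>
    comp_weight lam (R \<union> S) c = comp_weight lam R (comp_restr A c) * comp_weight lam S (comp_restr B c)"
proof (induction c)
  case (Cons X c)
  then show ?case
    using top_character_restr_Un[OF lam fin disj qo, of X]
    by (simp add: comp_weight_comp_restr_Cons top_character_empty[OF lam] mult_ac)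
qed simp

lemma psi_comp_Un:
  assumes lam: "top_character lam" and fin: "finite A" "finite B" and disj: "A \<inter> B = {}"
    and qo: "quasi_order A R" "quasi_order B S"
  shows "psi_comp lam (A \<union> B) (R \<union> S) c =
    (if c \<in> comps (A \<union> B) then psi_comp lam A R (comp_restr A c) * psi_comp lam B S (comp_restr B c) else 0)"
proof (cases "c \<in> comps (A \<union> B)")
  case True
  then have "comp_restr A c \<in> comps A" "comp_restr B c \<in> comps B"
    using comps_comp_restr[OF True, of A] comps_comp_restr[OF True, of B] by (simp_all add: Int_absorb1)
  with True show ?thesis
    using mono_comp_Un[OF quasi_order_subset[OF qo(1)] quasi_order_subset[OF qo(2)], of c]
      comp_weight_Un[OF lam fin disj qo] Union_comps[OF True]
    by (simp add: psi_comp_def)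
qed (simp add: psi_comp_def)

section \<open>Quasi-shuffles\<close>

(* The map \<sigma> numbers the blocks of w and of the result from 1, as in QSh, while list indices
  start at 0. *)

definition merge_blocks :: "'a set list \<Rightarrow> (nat \<Rightarrow> nat) \<Rightarrow> nat \<Rightarrow> 'a set list" where
  "merge_blocks w \<sigma> m = map (\<lambda>j. \<Union>{w ! (i - 1) | i. i \<in> {1..length w} \<and> \<sigma> i = Suc j}) [0..<m]"

lemma length_merge_blocks [simp]: "length (merge_blocks w \<sigma> m) = m"
  by (simp add: merge_blocks_def)

lemma mem_merge_blocks_nth:
  assumes "j < m"
  shows "x \<in> merge_blocks w \<sigma> m ! j \<longleftrightarrow> (\<exists>t < length w. \<sigma> (Suc t) = Suc j \<and> x \<in> w ! t)"
proof
  assume "x \<in> merge_blocks w \<sigma> m ! j"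
  then obtain i where "i \<in> {1..length w}" "\<sigma> i = Suc j" "x \<in> w ! (i - 1)"
    using assms by (auto simp: merge_blocks_def simp del: upt_Suc)
  then show "\<exists>t < length w. \<sigma> (Suc t) = Suc j \<and> x \<in> w ! t"
    by (intro exI[of _ "i - 1"]) auto
next
  assume "\<exists>t < length w. \<sigma> (Suc t) = Suc j \<and> x \<in> w ! t"
  then obtain t where "t < length w" "\<sigma> (Suc t) = Suc j" "x \<in> w ! t"
    by blast
  with assms show "x \<in> merge_blocks w \<sigma> m ! j"
    unfolding merge_blocks_def by (auto simp del: upt_Suc intro!: exI[of _ "w ! t"] exI[of _ "Suc t"])
qed

lemma merge_blocks_index:
  assumes range: "\<sigma> ` {1..length w} \<subseteq> {1..m}" and t: "t < length w" "x \<in> w ! t"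
  shows "\<sigma> (Suc t) - 1 < m" and "x \<in> merge_blocks w \<sigma> m ! (\<sigma> (Suc t) - 1)" and "0 < \<sigma> (Suc t)"
proof -
  have "Suc t \<in> {1..length w}"
    using t(1) by simp
  then have "\<sigma> (Suc t) \<in> {1..m}"
    using range by blast
  then have j: "\<sigma> (Suc t) - 1 < m" "\<sigma> (Suc t) = Suc (\<sigma> (Suc t) - 1)"
    by auto
  then show "\<sigma> (Suc t) - 1 < m" "0 < \<sigma> (Suc t)"
    by simp_all
  from j t show "x \<in> merge_blocks w \<sigma> m ! (\<sigma> (Suc t) - 1)"
    unfolding mem_merge_blocks_nth[OF j(1)] by blast
qed

lemma merge_blocks_nth_nonempty:
  assumes w: "w \<in> comps U" and onto: "{1..m} \<subseteq> \<sigma> ` {1..length w}" and j: "j < m"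
  shows "merge_blocks w \<sigma> m ! j \<noteq> {}"
proof -
  from j onto have "Suc j \<in> \<sigma> ` {1..length w}"
    by auto
  then obtain i where "i \<in> {1..length w}" "\<sigma> i = Suc j"
    by (metis imageE)
  then obtain t where t: "t < length w" "\<sigma> (Suc t) = Suc j"
    by (intro that[of "i - 1"]) auto
  moreover obtain x where "x \<in> w ! t"
    using comps_nth_nonempty[OF w t(1)] by blast
  ultimately have "x \<in> merge_blocks w \<sigma> m ! j"
    unfolding mem_merge_blocks_nth[OF j] by blast
  then show ?thesis
    by blast
qed

lemma merge_blocks_disjoint:
  assumes w: "w \<in> comps U" and j: "j < m" "j' < m" "j \<noteq> j'"
  shows "merge_blocks w \<sigma> m ! j \<inter> merge_blocks w \<sigma> m ! j' = {}"
proof (rule ccontr)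
  assume "merge_blocks w \<sigma> m ! j \<inter> merge_blocks w \<sigma> m ! j' \<noteq> {}"
  then obtain x where "x \<in> merge_blocks w \<sigma> m ! j" "x \<in> merge_blocks w \<sigma> m ! j'"
    by blast
  then obtain t t' where t: "t < length w" "\<sigma> (Suc t) = Suc j" "x \<in> w ! t"
    and t': "t' < length w" "\<sigma> (Suc t') = Suc j'" "x \<in> w ! t'"
    unfolding mem_merge_blocks_nth[OF j(1)] mem_merge_blocks_nth[OF j(2)] by blast
  then have "t = t'"
    using comps_index_unique[OF w] by blast
  with t(2) t'(2) j(3) show False
    by simp
qed

lemma Union_merge_blocks:
  assumes w: "w \<in> comps U" and range: "\<sigma> ` {1..length w} \<subseteq> {1..m}"
  shows "\<Union>(set (merge_blocks w \<sigma> m)) = U"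
proof (intro set_eqI iffI)
  fix x assume "x \<in> \<Union>(set (merge_blocks w \<sigma> m))"
  then obtain j where j: "j < m" "x \<in> merge_blocks w \<sigma> m ! j"
    by (auto simp: in_set_conv_nth)
  then obtain t where "t < length w" "x \<in> w ! t"
    unfolding mem_merge_blocks_nth[OF j(1)] by blast
  then show "x \<in> U"
    using comps_nth_subset[OF w] by blast
next
  fix x assume "x \<in> U"
  then obtain t where "t < length w" "x \<in> w ! t"
    using comps_index_exists[OF w] by blast
  note block = merge_blocks_index[OF range this]
  with block(1) show "x \<in> \<Union>(set (merge_blocks w \<sigma> m))"
    by (metis UnionI length_merge_blocks nth_mem)
qed

lemma comps_merge_blocks:
  assumes w: "w \<in> comps U" and onto: "\<sigma> ` {1..length w} = {1..m}"
  shows "merge_blocks w \<sigma> m \<in> comps U"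
  using merge_blocks_nth_nonempty[OF w] merge_blocks_disjoint[OF w] Union_merge_blocks[OF w] onto
  unfolding comps_def by (auto simp: in_set_conv_nth)

lemma filter_nonempty_blocks:
  fixes \<sigma> :: "nat \<Rightarrow> nat" and W :: "nat \<Rightarrow> 'a set"
  assumes sorted: "sorted_wrt (<) ixs" and mono: "strict_mono_on (set ixs) \<sigma>"
    and range: "\<sigma> ` set ixs \<subseteq> {1..m}" and nonempty: "\<forall>i\<in>set ixs. W i \<noteq> {}"
  shows "filter (\<lambda>X. X \<noteq> {}) (map (\<lambda>j. \<Union>{W i | i. i \<in> set ixs \<and> \<sigma> i = Suc j}) [0..<m]) = map W ixs"
proof -
  define g where "g = (\<lambda>j. \<Union>{W i | i. i \<in> set ixs \<and> \<sigma> i = Suc j})"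
  have inj: "inj_on \<sigma> (set ixs)"
    using mono by (rule strict_mono_on_imp_inj_on)
  have g_\<sigma>: "g (\<sigma> i - 1) = W i" if "i \<in> set ixs" for i
  proof -
    have "Suc (\<sigma> i - 1) = \<sigma> i"
      using that range by fastforce
    then have "{W i' | i'. i' \<in> set ixs \<and> \<sigma> i' = Suc (\<sigma> i - 1)} = {W i}"
      using that inj by (auto simp: inj_on_eq_iff)
    then show ?thesis
      by (simp add: g_def)
  qed
  have "{j \<in> {0..<m}. g j \<noteq> {}} = (\<lambda>i. \<sigma> i - 1) ` set ixs"
  proof (intro set_eqI iffI)
    fix j assume "j \<in> {j \<in> {0..<m}. g j \<noteq> {}}"
    then obtain i where "i \<in> set ixs" "\<sigma> i = Suc j"
      by (auto simp: g_def)
    then show "j \<in> (\<lambda>i. \<sigma> i - 1) ` set ixs"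
      by force
  next
    fix j assume "j \<in> (\<lambda>i. \<sigma> i - 1) ` set ixs"
    then obtain i where "i \<in> set ixs" "j = \<sigma> i - 1"
      by blast
    then show "j \<in> {j \<in> {0..<m}. g j \<noteq> {}}"
      using g_\<sigma> nonempty range by fastforce
  qed
  moreover have "sorted_wrt (<) (map (\<lambda>i. \<sigma> i - 1) ixs)"
    unfolding sorted_wrt_map
  proof (rule sorted_wrt_mono_rel[OF _ sorted])
    fix i i' assume "i \<in> set ixs" "i' \<in> set ixs" "i < i'"
    then show "\<sigma> i - 1 < \<sigma> i' - 1"
      using mono range unfolding strict_mono_on_def by fastforce
  qed
  ultimately have "filter (\<lambda>j. g j \<noteq> {}) [0..<m] = map (\<lambda>i. \<sigma> i - 1) ixs"
    by (intro sorted_distinct_set_unique) (auto simp: strict_sorted_iff sorted_wrt_filter)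
  then have "filter (\<lambda>X. X \<noteq> {}) (map g [0..<m]) = map (\<lambda>i. g (\<sigma> i - 1)) ixs"
    by (simp add: filter_map comp_def del: upt_Suc)
  also have "\<dots> = map W ixs"
    using g_\<sigma> by simp
  finally show ?thesis
    unfolding g_def .
qed

lemma comp_restr_merge_blocks:
  assumes sorted: "sorted_wrt (<) ixs" and ixs: "set ixs \<subseteq> {1..length w}"
    and mono: "strict_mono_on (set ixs) \<sigma>" and range: "\<sigma> ` {1..length w} \<subseteq> {1..m}"
    and inside: "\<forall>i\<in>set ixs. w ! (i - 1) \<subseteq> D \<and> w ! (i - 1) \<noteq> {}"
    and outside: "\<forall>i\<in>{1..length w} - set ixs. w ! (i - 1) \<inter> D = {}"
  shows "comp_restr D (merge_blocks w \<sigma> m) = map (\<lambda>i. w ! (i - 1)) ixs"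
proof -
  have "\<Union>{w ! (i - 1) | i. i \<in> {1..length w} \<and> \<sigma> i = Suc j} \<inter> D =
      \<Union>{w ! (i - 1) | i. i \<in> set ixs \<and> \<sigma> i = Suc j}" for j
    using inside outside ixs by blast
  then have "comp_restr D (merge_blocks w \<sigma> m) =
      filter (\<lambda>X. X \<noteq> {}) (map (\<lambda>j. \<Union>{w ! (i - 1) | i. i \<in> set ixs \<and> \<sigma> i = Suc j}) [0..<m])"
    by (simp add: comp_restr_def merge_blocks_def comp_def del: upt_Suc)
  also have "\<dots> = map (\<lambda>i. w ! (i - 1)) ixs"
    by (rule filter_nonempty_blocks[OF sorted mono]) (use range ixs inside in auto)
  finally show ?thesis .
qed

lemma QSh_zero: "\<sigma> \<in> QSh k l \<Longrightarrow> i \<notin> {1..k + l} \<Longrightarrow> \<sigma> i = 0"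
  by (simp add: QSh_def)

lemma QSh_image: "\<sigma> \<in> QSh k l \<Longrightarrow> \<sigma> ` {1..k + l} = {1..qsh_max (k + l) \<sigma>}"
proof -
  assume "\<sigma> \<in> QSh k l"
  then obtain m where onto: "\<sigma> ` {1..k + l} = {1..m}"
    by (auto simp: QSh_def)
  then have "qsh_max (k + l) \<sigma> = m"
    unfolding qsh_max_def by (simp only: Max_insert_0_atLeastAtMost)
  with onto show ?thesis
    by simp
qed

lemma qsh_result_eq_merge_blocks:
  "qsh_result c1 c2 \<sigma> = merge_blocks (c1 @ c2) \<sigma> (qsh_max (length c1 + length c2) \<sigma>)"
  by (simp add: qsh_result_def merge_blocks_def Let_def comp_def map_Suc_upt[symmetric] del: upt_Suc)

lemma qsh_result_comps:
  assumes c1: "c1 \<in> comps A" and c2: "c2 \<in> comps B" and disj: "A \<inter> B = {}"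
    and \<sigma>: "\<sigma> \<in> QSh (length c1) (length c2)"
  shows "qsh_result c1 c2 \<sigma> \<in> comps (A \<union> B)"
  unfolding qsh_result_eq_merge_blocks
  by (rule comps_merge_blocks[OF comps_append[OF c1 c2 disj]]) (use QSh_image[OF \<sigma>] in simp)

lemma map_nth_append_left: "map (\<lambda>i. (c1 @ c2) ! (i - 1)) [1..<length c1 + 1] = c1"
  by (rule nth_equalityI) (simp_all add: nth_append del: upt_Suc)

lemma map_nth_append_right:
  "map (\<lambda>i. (c1 @ c2) ! (i - 1)) [length c1 + 1..<length (c1 @ c2) + 1] = c2"
  by (rule nth_equalityI) (simp_all add: nth_append del: upt_Suc)

lemma comps_append_nth:
  assumes c1: "c1 \<in> comps A" and c2: "c2 \<in> comps B"
  shows "1 \<le> i \<Longrightarrow> i \<le> length c1 \<Longrightarrow> (c1 @ c2) ! (i - 1) \<subseteq> A \<and> (c1 @ c2) ! (i - 1) \<noteq> {}"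
    and "length c1 < i \<Longrightarrow> i \<le> length (c1 @ c2) \<Longrightarrow> (c1 @ c2) ! (i - 1) \<subseteq> B \<and> (c1 @ c2) ! (i - 1) \<noteq> {}"
proof -
  show "(c1 @ c2) ! (i - 1) \<subseteq> A \<and> (c1 @ c2) ! (i - 1) \<noteq> {}" if "1 \<le> i" "i \<le> length c1"
    using that comps_nth_subset[OF c1] comps_nth_nonempty[OF c1] by (auto simp: nth_append)
  show "(c1 @ c2) ! (i - 1) \<subseteq> B \<and> (c1 @ c2) ! (i - 1) \<noteq> {}" if "length c1 < i" "i \<le> length (c1 @ c2)"
  proof -
    have "i - 1 - length c1 < length c2" and "(c1 @ c2) ! (i - 1) = c2 ! (i - 1 - length c1)"
      using that by (auto simp: nth_append)
    then show ?thesis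
      using comps_nth_subset[OF c2] comps_nth_nonempty[OF c2] by simp
  qed
qed

lemma comp_restr_qsh_result:
  assumes c1: "c1 \<in> comps A" and c2: "c2 \<in> comps B" and disj: "A \<inter> B = {}"
    and \<sigma>: "\<sigma> \<in> QSh (length c1) (length c2)"
  shows "comp_restr A (qsh_result c1 c2 \<sigma>) = c1" and "comp_restr B (qsh_result c1 c2 \<sigma>) = c2"
proof -
  let ?k = "length c1" and ?w = "c1 @ c2"
  note left = comps_append_nth(1)[OF c1 c2] and right = comps_append_nth(2)[OF c1 c2]
  have range: "\<sigma> ` {1..length ?w} \<subseteq> {1..qsh_max (length c1 + length c2) \<sigma>}"
    using QSh_image[OF \<sigma>] by simp
  have "comp_restr A (qsh_result c1 c2 \<sigma>) = map (\<lambda>i. ?w ! (i - 1)) [1..<?k + 1]"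
    unfolding qsh_result_eq_merge_blocks
  proof (rule comp_restr_merge_blocks[OF _ _ _ range])
    show "strict_mono_on (set [1..<?k + 1]) \<sigma>"
      using \<sigma> by (simp add: QSh_def atLeastLessThanSuc_atLeastAtMost del: upt_Suc)
    show "\<forall>i\<in>{1..length ?w} - set [1..<?k + 1]. ?w ! (i - 1) \<inter> A = {}"
    proof
      fix i assume "i \<in> {1..length ?w} - set [1..<?k + 1]"
      then have "?k < i" "i \<le> length ?w"
        by auto
      then show "?w ! (i - 1) \<inter> A = {}"
        using right disj by blast
    qed
  qed (use left in \<open>auto simp del: upt_Suc\<close>)
  then show "comp_restr A (qsh_result c1 c2 \<sigma>) = c1"
    by (simp only: map_nth_append_left)
  have "comp_restr B (qsh_result c1 c2 \<sigma>) = map (\<lambda>i. ?w ! (i - 1)) [?k + 1..<length ?w + 1]"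
    unfolding qsh_result_eq_merge_blocks
  proof (rule comp_restr_merge_blocks[OF _ _ _ range])
    show "strict_mono_on (set [?k + 1..<length ?w + 1]) \<sigma>"
      using \<sigma> by (simp add: QSh_def atLeastLessThanSuc_atLeastAtMost del: upt_Suc)
    show "\<forall>i\<in>{1..length ?w} - set [?k + 1..<length ?w + 1]. ?w ! (i - 1) \<inter> B = {}"
    proof
      fix i assume "i \<in> {1..length ?w} - set [?k + 1..<length ?w + 1]"
      then have "1 \<le> i" "i \<le> ?k"
        by auto
      then show "?w ! (i - 1) \<inter> B = {}"
        using left disj by blast
    qed
  qed (use right in \<open>auto simp del: upt_Suc\<close>)
  then show "comp_restr B (qsh_result c1 c2 \<sigma>) = c2"
    by (simp only: map_nth_append_right)
qed

lemma inj_on_qsh_result: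
  assumes c1: "c1 \<in> comps A" and c2: "c2 \<in> comps B" and disj: "A \<inter> B = {}"
  shows "inj_on (qsh_result c1 c2) (QSh (length c1) (length c2))"
proof (rule inj_onI)
  fix \<sigma> \<tau>
  assume \<sigma>: "\<sigma> \<in> QSh (length c1) (length c2)" and \<tau>: "\<tau> \<in> QSh (length c1) (length c2)"
    and eq: "qsh_result c1 c2 \<sigma> = qsh_result c1 c2 \<tau>"
  let ?w = "c1 @ c2" and ?R = "qsh_result c1 c2 \<sigma>"
  have "qsh_max (length c1 + length c2) \<tau> = length ?R"
    using arg_cong[OF eq, of length] by (simp add: qsh_result_eq_merge_blocks)
  then have range: "\<sigma> ` {1..length ?w} \<subseteq> {1..length ?R}" "\<tau> ` {1..length ?w} \<subseteq> {1..length ?R}"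
    using QSh_image[OF \<sigma>] QSh_image[OF \<tau>] by (simp_all add: qsh_result_eq_merge_blocks)
  have on_blocks: "\<sigma> (Suc t) = \<tau> (Suc t)" if t: "t < length ?w" for t
  proof -
    obtain x where x: "x \<in> ?w ! t"
      using comps_nth_nonempty[OF comps_append[OF c1 c2 disj] t] by blast
    note \<sigma>_block = merge_blocks_index[OF range(1) t x] and \<tau>_block = merge_blocks_index[OF range(2) t x]
    have "\<sigma> (Suc t) - 1 = \<tau> (Suc t) - 1"
      using \<sigma>_block \<tau>_block eq comps_index_unique[OF qsh_result_comps[OF c1 c2 disj \<sigma>]]
      unfolding qsh_result_eq_merge_blocks by (metis length_merge_blocks)
    with \<sigma>_block(3) \<tau>_block(3) show ?thesis
      by simp
  qed
  have "\<sigma> i = \<tau> i" for i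
  proof (cases "i \<in> {1..length ?w}")
    case True
    then obtain t where "i = Suc t" "t < length ?w"
      by (cases i) auto
    with on_blocks show ?thesis
      by simp
  next
    case False
    then show ?thesis
      using QSh_zero[OF \<sigma>] QSh_zero[OF \<tau>] by simp
  qed
  then show "\<sigma> = \<tau>"
    by blast
qed

lemma QSh_of_index_lists:
  assumes JA: "sorted_wrt (<) JA" and JB: "sorted_wrt (<) JB" and cover: "set JA \<union> set JB = {0..<m}"
  defines "\<sigma> \<equiv> \<lambda>i. if i \<in> {1..length JA + length JB} then Suc ((JA @ JB) ! (i - 1)) else 0"
  shows "\<sigma> \<in> QSh (length JA) (length JB)" and "qsh_max (length JA + length JB) \<sigma> = m"
proof -
  let ?k = "length JA" and ?n = "length JA + length JB"
  have "\<sigma> ` {1..?n} = \<sigma> ` Suc ` {0..<?n}"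
    by (simp add: atLeastLessThanSuc_atLeastAtMost)
  also have "\<dots> = (\<lambda>t. \<sigma> (Suc t)) ` {0..<?n}"
    by (rule image_image)
  also have "\<dots> = (\<lambda>t. Suc ((JA @ JB) ! t)) ` {0..<?n}"
    by (rule image_cong) (auto simp: \<sigma>_def)
  also have "\<dots> = Suc ` set (JA @ JB)"
    by (auto simp: set_conv_nth image_iff)
  also have "\<dots> = {1..m}"
    using cover by (simp add: atLeastLessThanSuc_atLeastAtMost)
  finally have onto: "\<sigma> ` {1..?n} = {1..m}" .
  have \<sigma>_A: "\<sigma> i = Suc (JA ! (i - 1))" if "i \<in> {1..?k}" for i
    using that by (auto simp: \<sigma>_def nth_append)
  have \<sigma>_B: "\<sigma> i = Suc (JB ! (i - 1 - ?k))" if "i \<in> {?k + 1..?n}" for i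
    using that by (auto simp: \<sigma>_def nth_append)
  have "strict_mono_on {1..?k} \<sigma>"
  proof (rule strict_mono_onI)
    fix i i' assume "i \<in> {1..?k}" "i' \<in> {1..?k}" "i < i'"
    then show "\<sigma> i < \<sigma> i'"
      using sorted_wrt_nth_less[OF JA, of "i - 1" "i' - 1"] \<sigma>_A by simp
  qed
  moreover have "strict_mono_on {?k + 1..?n} \<sigma>"
  proof (rule strict_mono_onI)
    fix i i' assume "i \<in> {?k + 1..?n}" "i' \<in> {?k + 1..?n}" "i < i'"
    then show "\<sigma> i < \<sigma> i'"
      using sorted_wrt_nth_less[OF JB, of "i - 1 - ?k" "i' - 1 - ?k"] \<sigma>_B by simp
  qed
  ultimately show "\<sigma> \<in> QSh ?k (length JB)"
    using onto by (auto simp: QSh_def \<sigma>_def)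
  show "qsh_max ?n \<sigma> = m"
    unfolding qsh_max_def onto by (rule Max_insert_0_atLeastAtMost)
qed

lemma ex_less_add_iff: "(\<exists>t < k + (l::nat). P t) \<longleftrightarrow> (\<exists>t < k. P t) \<or> (\<exists>t < l. P (k + t))"
proof
  assume "\<exists>t < k + l. P t"
  then obtain t where t: "t < k + l" "P t"
    by blast
  show "(\<exists>t < k. P t) \<or> (\<exists>t < l. P (k + t))"
  proof (cases "t < k")
    case True
    with t show ?thesis
      by blast
  next
    case False
    with t have "t - k < l" "P (k + (t - k))"
      by auto
    then show ?thesis
      by blast
  qed
qed (metis add_less_cancel_left trans_less_add1)

lemma qsh_result_exists:
  assumes c: "c \<in> comps (A \<union> B)" and disj: "A \<inter> B = {}"
  shows "\<exists>\<sigma>\<in>QSh (length (comp_restr A c)) (length (comp_restr B c)).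
    qsh_result (comp_restr A c) (comp_restr B c) \<sigma> = c"
proof -
  \<comment> \<open>\<open>JA\<close> and \<open>JB\<close> list the blocks of \<open>c\<close> meeting \<open>A\<close> and \<open>B\<close>; \<open>\<sigma>\<close> sends each block of
    \<open>comp_restr A c\<close> and of \<open>comp_restr B c\<close> to the block of \<open>c\<close> it was cut from.\<close>
  define JA where "JA = filter (\<lambda>j. c ! j \<inter> A \<noteq> {}) [0..<length c]"
  define JB where "JB = filter (\<lambda>j. c ! j \<inter> B \<noteq> {}) [0..<length c]"
  let ?J = "JA @ JB" and ?k = "length JA" and ?n = "length JA + length JB"
  define \<sigma> where "\<sigma> \<equiv> \<lambda>i. if i \<in> {1..?n} then Suc (?J ! (i - 1)) else 0"
  let ?w = "comp_restr A c @ comp_restr B c"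
  have restr: "comp_restr A c = map (\<lambda>j. c ! j \<inter> A) JA" "comp_restr B c = map (\<lambda>j. c ! j \<inter> B) JB"
    by (simp_all add: comp_restr_conv_filter JA_def JB_def)
  have sorted: "sorted_wrt (<) JA" "sorted_wrt (<) JB"
    by (simp_all add: JA_def JB_def sorted_wrt_filter)
  have "c ! j \<inter> A \<noteq> {} \<or> c ! j \<inter> B \<noteq> {}" if "j < length c" for j
    using comps_nth_nonempty[OF c that] comps_nth_subset[OF c that] by blast
  then have "set JA \<union> set JB = {0..<length c}"
    by (auto simp: JA_def JB_def)
  note \<sigma>_QSh = QSh_of_index_lists[OF sorted this, folded \<sigma>_def]
  have \<sigma>_Suc: "\<sigma> (Suc t) = Suc (?J ! t)" if "t < ?n" for t
    using that by (simp add: \<sigma>_def)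
  have "merge_blocks ?w \<sigma> (length c) = c"
  proof (rule nth_equalityI)
    fix j assume "j < length (merge_blocks ?w \<sigma> (length c))"
    then have j: "j < length c"
      by simp
    have "x \<in> merge_blocks ?w \<sigma> (length c) ! j \<longleftrightarrow> x \<in> c ! j" for x
    proof -
      have "x \<in> merge_blocks ?w \<sigma> (length c) ! j \<longleftrightarrow> (\<exists>t < ?k + length JB. ?J ! t = j \<and> x \<in> ?w ! t)"
        unfolding mem_merge_blocks_nth[OF j] using \<sigma>_Suc by (auto simp: restr)
      also have "\<dots> \<longleftrightarrow> (\<exists>t < ?k. JA ! t = j \<and> x \<in> c ! j \<inter> A) \<or> (\<exists>t < length JB. JB ! t = j \<and> x \<in> c ! j \<inter> B)"
        unfolding ex_less_add_iff by (auto simp: restr nth_append)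
      also have "\<dots> \<longleftrightarrow> (j \<in> set JA \<and> x \<in> c ! j \<inter> A) \<or> (j \<in> set JB \<and> x \<in> c ! j \<inter> B)"
        by (auto simp: in_set_conv_nth)
      also have "\<dots> \<longleftrightarrow> x \<in> c ! j"
        using j comps_nth_subset[OF c j] by (auto simp: JA_def JB_def)
      finally show ?thesis .
    qed
    then show "merge_blocks ?w \<sigma> (length c) ! j = c ! j"
      by blast
  qed simp
  moreover have "qsh_result (comp_restr A c) (comp_restr B c) \<sigma> = merge_blocks ?w \<sigma> (length c)"
    using \<sigma>_QSh(2) by (simp add: qsh_result_eq_merge_blocks restr)
  ultimately show ?thesis
    using \<sigma>_QSh(1) by (auto simp: restr)
qed

lemma card_qsh_result_eq:
  assumes c1: "c1 \<in> comps A" and c2: "c2 \<in> comps B" and disj: "A \<inter> B = {}"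
  shows "card {\<sigma> \<in> QSh (length c1) (length c2). qsh_result c1 c2 \<sigma> = c} =
    (if c \<in> comps (A \<union> B) \<and> comp_restr A c = c1 \<and> comp_restr B c = c2 then 1 else 0)"
proof (cases "c \<in> comps (A \<union> B) \<and> comp_restr A c = c1 \<and> comp_restr B c = c2")
  case True
  then obtain \<sigma> where \<sigma>: "\<sigma> \<in> QSh (length c1) (length c2)" "qsh_result c1 c2 \<sigma> = c"
    using qsh_result_exists[OF _ disj, of c] by blast
  then have "{\<sigma> \<in> QSh (length c1) (length c2). qsh_result c1 c2 \<sigma> = c} = {\<sigma>}"
    using inj_on_qsh_result[OF c1 c2 disj] by (auto dest: inj_onD)
  then show ?thesis
    using True by simp
next
  case False
  then have "{\<sigma> \<in> QSh (length c1) (length c2). qsh_result c1 c2 \<sigma> = c} = {}"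
    using qsh_result_comps[OF c1 c2 disj] comp_restr_qsh_result[OF c1 c2 disj] by blast
  then show ?thesis
    using False by (simp only: card.empty if_False)
qed

lemma psi_comp_qsh_prod:
  assumes lam: "top_character lam" and fin: "finite A" "finite B" and disj: "A \<inter> B = {}"
    and qo: "quasi_order A R" "quasi_order B S"
  shows "psi_comp lam (A \<union> B) (R \<union> S) = qsh_prod A B (psi_comp lam A R) (psi_comp lam B S)"
proof
  fix c
  let ?\<psi>A = "psi_comp lam A R" and ?\<psi>B = "psi_comp lam B S"
  have "qsh_prod A B ?\<psi>A ?\<psi>B c =
      (\<Sum>c1\<in>comps A. if c1 = comp_restr A c then
         (\<Sum>c2\<in>comps B. if c2 = comp_restr B c then
            (if c \<in> comps (A \<union> B) then ?\<psi>A c1 * ?\<psi>B c2 else 0) else 0) else 0)"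
    unfolding qsh_prod_def
    by (intro sum.cong refl) (auto simp: card_qsh_result_eq[OF _ _ disj] intro!: sum.cong)
  also have "\<dots> = psi_comp lam (A \<union> B) (R \<union> S) c"
  proof (cases "c \<in> comps (A \<union> B)")
    case True
    then have "comp_restr A c \<in> comps A" "comp_restr B c \<in> comps B"
      using comps_comp_restr[OF True, of A] comps_comp_restr[OF True, of B] by (simp_all add: Int_absorb1)
    with True show ?thesis
      using finite_comps[OF fin(1)] finite_comps[OF fin(2)]
      by (simp add: psi_comp_Un[OF lam fin disj qo])
  next
    case False
    then have "psi_comp lam (A \<union> B) (R \<union> S) c = 0"
      by (simp add: psi_comp_Un[OF lam fin disj qo])
    with False show ?thesis
      by (auto intro!: sum.neutral)
  qed
  finally show "psi_comp lam (A \<union> B) (R \<union> S) c = qsh_prod A B ?\<psi>A ?\<psi>B c"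
    by simp
qed

section \<open>Morphisms into compositions\<close>

lemma top_comp_morphism_psi_comp:
  assumes lam: "top_character lam"
  shows "top_comp_morphism (psi_comp lam)"
  unfolding top_comp_morphism_def
proof (intro conjI allI impI ballI)
  show "psi_comp lam A R c = 0" if "c \<notin> comps A" for A R and c :: "'a set list"
    using that by (simp add: psi_comp_def)
  show "psi_comp lam B (rel_image \<sigma> R) (map ((`) \<sigma>) c) = psi_comp lam A R c"
    if "finite A" "bij_betw \<sigma> A B" "quasi_order A R" "c \<in> comps A" for A B \<sigma> R c
    using psi_comp_rel_image[OF lam that] .
  show "psi_comp lam {} {} = (\<lambda>c. if c = [] then 1 else 0)"
    by (rule psi_comp_empty)
  show "psi_comp lam (A \<union> B) (R \<union> S) = qsh_prod A B (psi_comp lam A R) (psi_comp lam B S)"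
    if "finite A" "finite B" "A \<inter> B = {}" "quasi_order A R" "quasi_order B S" for A B R S
    using psi_comp_qsh_prod[OF lam that] .
  show "psi_comp lam A R (c1 @ c2) =
      (if is_open R C then psi_comp lam B (restr R B) c1 * psi_comp lam C (restr R C) c2 else 0)"
    if "quasi_order A R" "B \<inter> C = {}" "B \<union> C = A" "c1 \<in> comps B" "c2 \<in> comps C" for A B C R c1 c2
    using psi_comp_append[OF quasi_order_subset[OF that(1)] that(2-5)] .
  show "psi_comp lam {} {} [] = 1"
    by (simp add: psi_comp_empty)
qed

lemma top_comp_morphism_outside_comps:
  "top_comp_morphism \<phi> \<Longrightarrow> finite A \<Longrightarrow> quasi_order A R \<Longrightarrow> c \<notin> comps A \<Longrightarrow> \<phi> A R c = 0"
  by (simp add: top_comp_morphism_def)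

lemma top_comp_morphism_append:
  "top_comp_morphism \<phi> \<Longrightarrow> finite A \<Longrightarrow> quasi_order A R \<Longrightarrow> B \<inter> C = {} \<Longrightarrow> B \<union> C = A \<Longrightarrow>
    c1 \<in> comps B \<Longrightarrow> c2 \<in> comps C \<Longrightarrow>
    \<phi> A R (c1 @ c2) = (if is_open R C then \<phi> B (restr R B) c1 * \<phi> C (restr R C) c2 else 0)"
  unfolding top_comp_morphism_def by blast

lemma top_comp_morphism_Nil: "top_comp_morphism \<phi> \<Longrightarrow> \<phi> {} {} [] = 1"
  by (simp add: top_comp_morphism_def)

lemma top_comp_morphism_unique:
  assumes \<phi>: "top_comp_morphism \<phi>"
    and eps: "\<forall>A R. finite A \<longrightarrow> quasi_order A R \<longrightarrow> eps_comp A (\<phi> A R) = lam A R"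
    and "finite A" and "quasi_order A R"
  shows "\<phi> A R c = psi_comp lam A R c"
  using assms(3,4)
proof (induction c arbitrary: A R)
  case Nil
  then show ?case
    using top_comp_morphism_outside_comps[OF \<phi>] top_comp_morphism_Nil[OF \<phi>]
    by (cases "A = {}") (auto simp: psi_comp_def quasi_order_empty_iff)
next
  case (Cons X c)
  show ?case
  proof (cases "X # c \<in> comps A")
    case False
    then show ?thesis
      using top_comp_morphism_outside_comps[OF \<phi> Cons.prems] by (simp add: psi_comp_def)
  next
    case True
    then have X: "X \<noteq> {}" "X \<subseteq> A" "[X] \<in> comps X" and c: "c \<in> comps (A - X)"
      by (auto simp: comps_Cons_iff)
    have split: "X \<inter> (A - X) = {}" "X \<union> (A - X) = A"
      using X by auto
    have fin: "finite X" "finite (A - X)"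
      using Cons.prems(1) X(2) by (auto intro: finite_subset)
    have qo: "quasi_order X (restr R X)" "quasi_order (A - X) (restr R (A - X))"
      using quasi_order_restr[OF Cons.prems(2)] X(2) by auto
    have "\<phi> X (restr R X) [X] = eps_comp X (\<phi> X (restr R X))"
      by (rule eps_comp_nonempty[OF fin(1) X(1), symmetric])
    also have "\<dots> = psi_comp lam X (restr R X) [X]"
      using eps fin(1) qo(1) X(1) quasi_order_subset[OF qo(1)] by (simp add: psi_comp_singleton)
    finally have "\<phi> X (restr R X) [X] = psi_comp lam X (restr R X) [X]" .
    moreover have "\<phi> (A - X) (restr R (A - X)) c = psi_comp lam (A - X) (restr R (A - X)) c"
      using Cons.IH fin(2) qo(2) by blast
    ultimately show ?thesis
      using top_comp_morphism_append[OF \<phi> Cons.prems split X(3) c]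
        psi_comp_append[where lam = lam, OF quasi_order_subset[OF Cons.prems(2)] split X(3) c]
      by simp
  qed
qed

lemma top_comp_morphism_transfer:
  assumes \<phi>: "top_comp_morphism \<phi>"
    and eq: "\<forall>A R. finite A \<longrightarrow> quasi_order A R \<longrightarrow> \<psi> A R = \<phi> A R"
  shows "top_comp_morphism \<psi>"
  unfolding top_comp_morphism_def
proof (intro conjI allI impI ballI)
  have eq': "\<psi> A R = \<phi> A R" if "finite A" "quasi_order A R" for A R
    using eq that by blast
  have empty: "\<psi> {} {} = \<phi> {} {}"
    by (rule eq') (simp_all add: quasi_order_empty_iff)
  show "\<psi> A R c = 0" if "finite A" "quasi_order A R" "c \<notin> comps A" for A R c
    using that eq' \<phi> by (simp add: top_comp_morphism_outside_comps)
  show "\<psi> B (rel_image \<sigma> R) (map ((`) \<sigma>) c) = \<psi> A R c"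
    if "finite A" "bij_betw \<sigma> A B" "quasi_order A R" "c \<in> comps A" for A B \<sigma> R c
    using that \<phi> eq'[of B "rel_image \<sigma> R"] eq'[of A R]
    by (simp add: top_comp_morphism_def bij_betw_finite quasi_order_rel_image)
  show "\<psi> {} {} = (\<lambda>c. if c = [] then 1 else 0)"
    using \<phi> empty by (simp add: top_comp_morphism_def)
  show "\<psi> (A \<union> B) (R \<union> S) = qsh_prod A B (\<psi> A R) (\<psi> B S)"
    if "finite A" "finite B" "A \<inter> B = {}" "quasi_order A R" "quasi_order B S" for A B R S
    using that \<phi> eq'[of "A \<union> B" "R \<union> S"] eq'[of A R] eq'[of B S]
    by (simp add: top_comp_morphism_def quasi_order_Un)
  show "\<psi> A R (c1 @ c2) = (if is_open R C then \<psi> B (restr R B) c1 * \<psi> C (restr R C) c2 else 0)"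
    if "finite A" "quasi_order A R" "B \<inter> C = {}" "B \<union> C = A" "c1 \<in> comps B" "c2 \<in> comps C"
    for A B C R c1 c2
  proof -
    have "finite B" "finite C" "quasi_order B (restr R B)" "quasi_order C (restr R C)"
      using that quasi_order_restr[OF that(2)] by auto
    then show ?thesis
      using that top_comp_morphism_append[OF \<phi>] eq' by simp
  qed
  show "\<psi> {} {} [] = 1"
    using \<phi> empty by (simp add: top_comp_morphism_Nil)
qed

theorem proposition40:
  fixes lam :: "'a set \<Rightarrow> ('a \<times> 'a) set \<Rightarrow> 'k::field"
  assumes "top_character lam"
  shows "top_comp_morphism (psi_formula lam) \<and>
         (\<forall>A R. finite A \<longrightarrow> quasi_order A R \<longrightarrow> eps_comp A (psi_formula lam A R) = lam A R) \<and>
         (\<forall>\<phi>. top_comp_morphism \<phi> \<and>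
               (\<forall>A R. finite A \<longrightarrow> quasi_order A R \<longrightarrow> eps_comp A (\<phi> A R) = lam A R) \<longrightarrow>
               (\<forall>A R. finite A \<longrightarrow> quasi_order A R \<longrightarrow> \<phi> A R = psi_formula lam A R))"
proof -
  have formula: "\<forall>A R. finite A \<longrightarrow> quasi_order A R \<longrightarrow> psi_formula lam A R = psi_comp lam A R"
    by (simp add: psi_formula_eq_psi_comp quasi_order_subset)
  have "top_comp_morphism (psi_formula lam)"
    using top_comp_morphism_transfer[OF top_comp_morphism_psi_comp[OF assms] formula] .
  moreover have "eps_comp A (psi_formula lam A R) = lam A R" if "finite A" "quasi_order A R" for A R
    using formula eps_comp_psi_comp[OF assms] that by simp
  moreover have "\<phi> A R = psi_formula lam A R"
    if "top_comp_morphism \<phi>" "\<forall>A R. finite A \<longrightarrow> quasi_order A R \<longrightarrow> eps_comp A (\<phi> A R) = lam A R"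
      and "finite A" "quasi_order A R" for \<phi> A R
    using formula top_comp_morphism_unique[OF that] that(3,4) by auto
  ultimately show ?thesis
    by blast
qed

end
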